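(* Let $k\ge1$, $m\ge0$, $N_1=n-mk\ge0$, $N_2=m$, let $\eta_1\in\mathbb C$ with $\hbar=k\eta_1$, $t_1=e^{\eta_1/2}$, $q=e^{\hbar/2}=t_1^k$, and $t_n\in\mathbb C^*$. Let $S_0=\bigsqcup_{\ell=1}^{N_2}\{e_{N_1+k(\ell-1)+j}-e_{N_1+k(\ell-1)+j+1}:1\le j\le k-1\}$, so $\mathcal D_0=\{x: x_j-x_{j+1}=\eta_1$ whenever $e_j-e_{j+1}\in S_0\}$, with coordinates $x_1,\dots,x_{N_1}$ and $y_\ell=\frac1k\sum_{s=0}^{k-1}x_{N_1+k\ell-s}$. Then the restriction to $\mathcal D_0$ of $$M_{-e_1}=\sum_{i=1}^n\sum_{\epsilon=\pm1}\prod_{j\ne i}g(\epsilon x_i-x_j;t_1,1)g(\epsilon x_i+x_j;t_1,1)\,g(\epsilon x_i;t_n,1)\,\mathsf T^{-\epsilon\hbar}_{x_i}$$ is well defined and equals $$\overline{M_{-e_1}}=\sum_{i=1}^{N_1}\sum_{\epsilon=\pm1}A_i^\epsilon\,\mathsf T^{-\epsilon\hbar}_{x_i}+\frac{q-q^{-1}}{t_1-t_1^{-1}}\sum_{\ell=1}^{N_2}\sum_{\epsilon=\pm1}B_\ell^\epsilon\,\mathsf T^{-\epsilon\eta_1}_{y_\ell},$$ where $A_i^\epsilon=\prod_{j\le N_1,j\ne i}g(\epsilon x_i-x_j;t_1,1)g(\epsilon x_i+x_j;t_1,1)\prod_{\ell'=1}^{N_2}g(\epsilon x_i-y_{\ell'};q^{1/2}t_1^{1/2},q^{-1/2}t_1^{1/2})g(\epsilon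 x_i+y_{\ell'};q^{1/2}t_1^{1/2},q^{-1/2}t_1^{1/2})\,g(\epsilon x_i;t_n,1)$ and $B_\ell^\epsilon=\prod_{j=1}^{N_1}g(\epsilon y_\ell-x_j;q^{1/2}t_1^{1/2},q^{1/2}t_1^{-1/2})g(\epsilon y_\ell+x_j;q^{1/2}t_1^{1/2},q^{1/2}t_1^{-1/2})\prod_{\ell'\ne\ell}g(\epsilon y_\ell-y_{\ell'};q,1)g(\epsilon y_\ell+y_{\ell'};q,1)\,g(\epsilon y_\ell;q^{1/2}t_1^{-1/2}t_n,q^{1/2}t_1^{-1/2})\,g(2\epsilon y_\ell;qt_1^{-1},1)$.
   Context: $R=B_n$ in $V=\mathbb C^n$ with orthonormal basis $e_i$, coordinates $x_i=(e_i,x)$; simple roots $e_i-e_{i+1}$ ($i<n$), $e_n$. $g(z;a,b)=\frac{ae^z-a^{-1}}{be^z-b^{-1}}$. $\hbar\in\mathbb C\setminus\pi i\mathbb Q$. $\mathsf T^a_z$ is the shift $z\mapsto z+a$; on functions on $V$, $\mathsf T^{-\epsilon\hbar}_{x_i}=\tau(\epsilon e_i)$ where $(\tau(\lambda)f)(x)=f(x-\hbar\lambda)$. With $\overline V=\{x:(\alpha,x)=0\ \forall\alpha\in S_0\}$ and $\bar\lambda$ the orthogonal projection onto $\overline V$, the restriction of $D=\sum_\lambda g_\lambda\tau(\lambda)$ to $\mathcal D_0$ is $\overline D=\sum_{\lambda'}\big(\sum_{\bar\lambda=\lambda'}g_\lambda\big)\big|_{\mathcal D_0}\tau(\lambda')$,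 provided these restricted coefficients are well-defined meromorphic functions on $\mathcal D_0$ (then e.g. $\tau(\epsilon e_i)$ for $i$ in the $\ell$-th block restricts to $\mathsf T^{-\epsilon\eta_1}_{y_\ell}$). *)

theory Defs
  imports Complex_Main
begin

text \<open>Vectors of V = C^n are represented as functions nat => complex supported on {1..n}
  (coordinates x_i = x i, 1-based). The bilinear form is (a,x) = sum_{j=1..n} a j * x j.\<close>

type_synonym cvec = "nat \<Rightarrow> complex"

definition gfun :: "complex \<Rightarrow> complex \<Rightarrow> complex \<Rightarrow> complex" where
  "gfun z a b = (a * exp z - inverse a) / (b * exp z - inverse b)"

definition gok :: "complex \<Rightarrow> complex \<Rightarrow> bool" where
  "gok z b \<longleftrightarrow> b * exp z - inverse b \<noteq> 0"

definition evec :: "nat \<Rightarrow> cvec" where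
  "evec i = (\<lambda>j. if j = i then 1 else 0)"

definition bform :: "nat \<Rightarrow> cvec \<Rightarrow> cvec \<Rightarrow> complex" where
  "bform n a x = (\<Sum>j=1..n. a j * x j)"

text \<open>Indices a with e_a - e_(a+1) in S_0 (here N1 = n - m k).\<close>
definition S0idx :: "nat \<Rightarrow> nat \<Rightarrow> nat \<Rightarrow> nat set" where
  "S0idx n m k = {(n - m*k) + k*(l-1) + j | l j. 1 \<le> l \<and> l \<le> m \<and> 1 \<le> j \<and> j \<le> k - 1}"

definition S0 :: "nat \<Rightarrow> nat \<Rightarrow> nat \<Rightarrow> cvec set" where
  "S0 n m k = {(\<lambda>j. evec a j - evec (a+1) j) | a. a \<in> S0idx n m k}"

definition Vsp :: "nat \<Rightarrow> cvec set" where
  "Vsp n = {v. \<forall>j. j \<notin> {1..n} \<longrightarrow> v j = 0}"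

definition Vbar :: "nat \<Rightarrow> nat \<Rightarrow> nat \<Rightarrow> cvec set" where
  "Vbar n m k = {v \<in> Vsp n. \<forall>\<alpha>\<in>S0 n m k. bform n \<alpha> v = 0}"

definition proj :: "nat \<Rightarrow> nat \<Rightarrow> nat \<Rightarrow> cvec \<Rightarrow> cvec" where
  "proj n m k lam = (THE mu. mu \<in> Vbar n m k \<and>
      (\<forall>v\<in>Vbar n m k. bform n (\<lambda>j. lam j - mu j) v = 0))"

definition D0 :: "nat \<Rightarrow> nat \<Rightarrow> nat \<Rightarrow> complex \<Rightarrow> cvec set" where
  "D0 n m k eta1 = {x. \<forall>a\<in>S0idx n m k. x a - x (a+1) = eta1}"

text \<open>A difference operator sum_{lam in Lam} c lam * tau(lam) is given by a finite set of shifts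
  Lam and coefficients c. Coefficient of tau(lam') in its restriction to D_0, at x in D_0.\<close>
definition restr_coef :: "nat \<Rightarrow> nat \<Rightarrow> nat \<Rightarrow> cvec set \<Rightarrow> (cvec \<Rightarrow> cvec \<Rightarrow> complex)
    \<Rightarrow> cvec \<Rightarrow> cvec \<Rightarrow> complex" where
  "restr_coef n m k Lam c lam' x = (\<Sum>lam\<in>{lam\<in>Lam. proj n m k lam = lam'}. c lam x)"

text \<open>The operator M_{-e_1}: shifts tau(eps e_i) (= T^{-eps hbar}_{x_i}).\<close>
definition signs :: "complex set" where "signs = {1, -1}"

definition MLam :: "nat \<Rightarrow> cvec set" where
  "MLam n = {(\<lambda>j. eps * evec i j) | i eps. i \<in> {1..n} \<and> eps \<in> signs}"

definition Mterm :: "nat \<Rightarrow> complex \<Rightarrow> complex \<Rightarrow> nat \<Rightarrow> complex \<Rightarrow> cvec \<Rightarrow> complex" where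
  "Mterm n t1 tn i eps x =
     (\<Prod>j\<in>{1..n}-{i}. gfun (eps * x i - x j) t1 1 * gfun (eps * x i + x j) t1 1)
       * gfun (eps * x i) tn 1"

definition Mcoef :: "nat \<Rightarrow> complex \<Rightarrow> complex \<Rightarrow> cvec \<Rightarrow> cvec \<Rightarrow> complex" where
  "Mcoef n t1 tn lam x =
     (\<Sum>i=1..n. \<Sum>eps\<in>signs. if lam = (\<lambda>j. eps * evec i j) then Mterm n t1 tn i eps x else 0)"

definition ycoord :: "nat \<Rightarrow> nat \<Rightarrow> nat \<Rightarrow> cvec \<Rightarrow> nat \<Rightarrow> complex" where
  "ycoord n m k x l = (1 / of_nat k) * (\<Sum>s=0..k-1. x ((n - m*k) + k*l - s))"

text \<open>u_l = projection of e_i for i in the l-th block; tau(eps u_l) restricts to T^{-eps eta1}_{y_l}.\<close>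
definition ublock :: "nat \<Rightarrow> nat \<Rightarrow> nat \<Rightarrow> nat \<Rightarrow> cvec" where
  "ublock n m k l = (\<lambda>j. if j \<in> {(n - m*k) + k*(l-1) + 1 .. (n - m*k) + k*l} then 1 / of_nat k else 0)"

text \<open>Square roots: q^(1/2) = exp(hbar/4), t1^(1/2) = exp(eta1/4).\<close>
definition Acoef :: "nat \<Rightarrow> nat \<Rightarrow> nat \<Rightarrow> complex \<Rightarrow> complex \<Rightarrow> nat \<Rightarrow> complex \<Rightarrow> cvec \<Rightarrow> complex" where
  "Acoef n m k eta1 tn i eps x =
    (let hbar = of_nat k * eta1; t1 = exp (eta1/2); qh = exp (hbar/4); t1h = exp (eta1/4);
         N1 = n - m*k; y = ycoord n m k x in
     (\<Prod>j\<in>{1..N1}-{i}. gfun (eps * x i - x j) t1 1 * gfun (eps * x i + x j) t1 1)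
     * (\<Prod>l'=1..m. gfun (eps * x i - y l') (qh * t1h) (t1h / qh)
                 * gfun (eps * x i + y l') (qh * t1h) (t1h / qh))
     * gfun (eps * x i) tn 1)"

definition Bcoef :: "nat \<Rightarrow> nat \<Rightarrow> nat \<Rightarrow> complex \<Rightarrow> complex \<Rightarrow> nat \<Rightarrow> complex \<Rightarrow> cvec \<Rightarrow> complex" where
  "Bcoef n m k eta1 tn l eps x =
    (let hbar = of_nat k * eta1; t1 = exp (eta1/2); q = exp (hbar/2); qh = exp (hbar/4);
         t1h = exp (eta1/4); N1 = n - m*k; y = ycoord n m k x in
     (\<Prod>j=1..N1. gfun (eps * y l - x j) (qh * t1h) (qh / t1h)
               * gfun (eps * y l + x j) (qh * t1h) (qh / t1h))
     * (\<Prod>l'\<in>{1..m}-{l}. gfun (eps * y l - y l') q 1 * gfun (eps * y l + y l') q 1)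
     * gfun (eps * y l) (qh / t1h * tn) (qh / t1h)
     * gfun (2 * eps * y l) (q / t1) 1)"

definition RHScoef :: "nat \<Rightarrow> nat \<Rightarrow> nat \<Rightarrow> complex \<Rightarrow> complex \<Rightarrow> cvec \<Rightarrow> cvec \<Rightarrow> complex" where
  "RHScoef n m k eta1 tn lam' x =
    (let hbar = of_nat k * eta1; t1 = exp (eta1/2); q = exp (hbar/2) in
     (\<Sum>i=1..n - m*k. \<Sum>eps\<in>signs.
         if lam' = (\<lambda>j. eps * evec i j) then Acoef n m k eta1 tn i eps x else 0)
     + (q - inverse q) / (t1 - inverse t1) *
       (\<Sum>l=1..m. \<Sum>eps\<in>signs.
         if lam' = (\<lambda>j. eps * ublock n m k l j) then Bcoef n m k eta1 tn l eps x else 0))"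

text \<open>Genericity: every g-factor occurring on either side has nonzero denominator at x.\<close>
definition generic_pt :: "nat \<Rightarrow> nat \<Rightarrow> nat \<Rightarrow> complex \<Rightarrow> cvec \<Rightarrow> bool" where
  "generic_pt n m k eta1 x \<longleftrightarrow>
    (let hbar = of_nat k * eta1; qh = exp (hbar/4); t1h = exp (eta1/4);
         N1 = n - m*k; y = ycoord n m k x in
     (\<forall>i\<in>{1..n}. \<forall>eps\<in>signs. gok (eps * x i) 1 \<and>
        (\<forall>j\<in>{1..n}-{i}. gok (eps * x i - x j) 1 \<and> gok (eps * x i + x j) 1)) \<and>
     (\<forall>i\<in>{1..N1}. \<forall>eps\<in>signs. \<forall>l\<in>{1..m}.
        gok (eps * x i - y l) (t1h / qh) \<and> gok (eps * x i + y l) (t1h / qh)) \<and>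
     (\<forall>l\<in>{1..m}. \<forall>eps\<in>signs.
        (\<forall>j\<in>{1..N1}. gok (eps * y l - x j) (qh / t1h) \<and> gok (eps * y l + x j) (qh / t1h)) \<and>
        (\<forall>l'\<in>{1..m}-{l}. gok (eps * y l - y l') 1 \<and> gok (eps * y l + y l') 1) \<and>
        gok (eps * y l) (qh / t1h) \<and> gok (2 * eps * y l) 1))"

end

theory Submission
  imports Defs
begin

text \<open>
  On D_0 every block of k coordinates x_{pos l 1}, ..., x_{pos l k} (l = 1..m) is an
  arithmetic string of step eta centred at y_l.  The shift tau(eps e_i) projects onto
  tau(eps e_i) itself for the N1 = n - m k outer coordinates and onto tau(eps u_l), u_l the
  normalised block indicator, for every i in block l.  Hence the restricted coefficient of
  tau(eps u_l) is the sum over the block of the coefficients of tau(eps e_i); all of them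
  vanish except the one at the end of the string (a neighbouring factor is g(-eta;t1,1) = 0),
  and that one equals [k]_{t1} * B_l^eps because products of g over an arithmetic string
  telescope.  For an outer coordinate the same telescoping collapses each block into the
  two factors of A_i^eps.
\<close>

lemma gfun_shift: "gfun (u + s) a b = gfun u (a * exp (s/2)) (b * exp (s/2))"
proof -
  define F where "F = exp (s/2)"
  have F: "F \<noteq> 0" "exp (u + s) = F * F * exp u"
    unfolding F_def by (simp_all add: exp_add[symmetric] add.commute)
  have rescale: "(c * F * exp u - inverse (c * F)) * F = c * exp (u + s) - inverse c" for c
    unfolding F(2) using F(1) by (simp add: algebra_simps)
  have "gfun u (a * F) (b * F) = ((a * F * exp u - inverse (a * F)) * F) / ((b * F * exp u - inverse (b * F)) * F)"
    unfolding gfun_def using F by simp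
  also have "\<dots> = gfun (u + s) a b"
    unfolding rescale gfun_def ..
  finally show ?thesis unfolding F_def by simp
qed

text \<open>The zero of g(z;t,1) at z = -e for t = e^{e/2}; it kills all non-extremal
  shifts inside a block.\<close>
lemma gfun_root: "gfun (-e) (exp (e/2)) 1 = 0"
proof -
  have "exp (e/2) * exp (-e) = inverse (exp (e/2))"
    by (simp add: exp_add[symmetric] exp_minus[symmetric])
  thus ?thesis unfolding gfun_def by simp
qed

text \<open>One step of the telescoping identity: the numerator of the first factor cancels
  the denominator of the second.\<close>
lemma gfun_telescope_step:
  assumes A: "A \<noteq> 0" and T: "T \<noteq> 0" and z': "exp z' = A * A * exp z" "exp z' \<noteq> 1"
  shows "gfun z A 1 * gfun z' T 1 = gfun z (T * A) 1"
proof -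
  have "gfun z A 1 * gfun z' T 1
      = (A * A * exp z - 1) / (A * (exp z - 1)) * ((T * A * A * exp z - inverse T) / (A * A * exp z - 1))"
    unfolding gfun_def z'(1) using A by (simp add: field_simps)
  also have "\<dots> = (T * A * A * exp z - inverse T) / (A * (exp z - 1))"
    using z' by simp
  also have "\<dots> = gfun z (T * A) 1"
    unfolding gfun_def using A T by (simp add: field_simps)
  finally show ?thesis .
qed

lemma gfun_telescope:
  assumes "exp z \<noteq> 1" "\<forall>s<K. exp (z + of_nat s * e) \<noteq> 1"
  shows "(\<Prod>s<K. gfun (z + of_nat s * e) (exp (e/2)) 1) = gfun z (exp (of_nat K * e/2)) 1"
  using assms(2)
proof (induction K)
  case 0
  then show ?case using assms(1) by (simp add: gfun_def)
next
  case (Suc K)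
  have IH: "(\<Prod>s<K. gfun (z + of_nat s * e) (exp (e/2)) 1) = gfun z (exp (of_nat K * e/2)) 1"
    using Suc by auto
  have sq: "exp (z + of_nat K * e) = exp (of_nat K * e/2) * exp (of_nat K * e/2) * exp z"
    by (simp add: exp_add[symmetric] algebra_simps)
  have step: "exp (of_nat (Suc K) * e/2) = exp (e/2) * exp (of_nat K * e/2)"
    by (simp add: exp_add[symmetric] algebra_simps add_divide_distrib)
  show ?case
    using gfun_telescope_step[OF _ _ sq] Suc.prems IH unfolding step by simp
qed

text \<open>The factor produced by a whole string of K coordinates of step e centred at 0, as seen
  from a point at distance u: g(u; q^{1/2} t^{1/2}, q^{-1/2} t^{1/2}) with q = e^{K e/2},
  t = e^{e/2}.\<close>
definition gstring :: "nat \<Rightarrow> complex \<Rightarrow> complex \<Rightarrow> complex" where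
  "gstring K e u = gfun u (exp (of_nat K * e/4) * exp (e/4)) (exp (e/4) / exp (of_nat K * e/4))"

lemma gstring_shift: "gstring K e (v + e * (of_nat K - 1)/2) = gfun v (exp (of_nat K * e/2)) 1"
proof -
  have "exp (of_nat K * e/4) * exp (e/4) * exp (e * (of_nat K - 1)/2/2) = exp (of_nat K * e/2)"
    by (simp only: exp_add[symmetric]) (rule arg_cong[of _ _ exp], simp add: field_simps)
  moreover have "exp (e/4) / exp (of_nat K * e/4) * exp (e * (of_nat K - 1)/2/2) = 1"
  proof -
    have "exp (e/4) / exp (of_nat K * e/4) * exp (e * (of_nat K - 1)/2/2)
        = exp (e/4 - of_nat K * e/4 + e * (of_nat K - 1)/2/2)"
      by (simp only: exp_add exp_diff)
    also have "e/4 - of_nat K * e/4 + e * (of_nat K - 1)/2/2 = 0" by (simp add: field_simps)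
    finally show ?thesis by simp
  qed
  ultimately show ?thesis unfolding gstring_def gfun_shift by simp
qed

lemma gfun_string_product:
  assumes K: "1 \<le> K" and nd: "\<forall>r\<in>{1..K}. exp (u - e * ((of_nat K + 1)/2 - of_nat r)) \<noteq> 1"
  shows "(\<Prod>r=1..K. gfun (u - e * ((of_nat K + 1)/2 - of_nat r)) (exp (e/2)) 1) = gstring K e u"
proof -
  define z0 where "z0 = u - e * (of_nat K - 1)/2"
  have arg: "u - e * ((of_nat K + 1)/2 - of_nat (Suc s)) = z0 + of_nat s * e" for s
    unfolding z0_def by (simp add: field_simps)
  have nd': "exp (z0 + of_nat s * e) \<noteq> 1" if "s < K" for s
    using nd[rule_format, of "Suc s"] that arg[of s] by simp
  have "(\<Prod>r=1..K. gfun (u - e * ((of_nat K + 1)/2 - of_nat r)) (exp (e/2)) 1)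
      = (\<Prod>s<K. gfun (z0 + of_nat s * e) (exp (e/2)) 1)"
    unfolding One_nat_def prod.atLeast1_atMost_eq arg ..
  also have "\<dots> = gfun z0 (exp (of_nat K * e/2)) 1"
    using nd'[of 0] nd' K by (intro gfun_telescope) auto
  also have "\<dots> = gstring K e u"
    using gstring_shift[of K e z0] unfolding z0_def by simp
  finally show ?thesis .
qed

lemma gfun_string_product':
  assumes K: "1 \<le> K" and nd: "\<forall>r\<in>{1..K}. exp (u + e * ((of_nat K + 1)/2 - of_nat r)) \<noteq> 1"
  shows "(\<Prod>r=1..K. gfun (u + e * ((of_nat K + 1)/2 - of_nat r)) (exp (e/2)) 1) = gstring K e u"
proof -
  have flip: "u + e * ((of_nat K + 1)/2 - of_nat (K + 1 - r)) = u - e * ((of_nat K + 1)/2 - of_nat r)"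
    if "r \<in> {1..K}" for r
    using that by (simp add: of_nat_diff field_simps)
  have "(\<Prod>r=1..K. gfun (u + e * ((of_nat K + 1)/2 - of_nat r)) (exp (e/2)) 1)
      = (\<Prod>r=1..K. gfun (u + e * ((of_nat K + 1)/2 - of_nat (K + 1 - r))) (exp (e/2)) 1)"
    by (rule prod.atLeastAtMost_rev)
  also have "\<dots> = (\<Prod>r=1..K. gfun (u - e * ((of_nat K + 1)/2 - of_nat r)) (exp (e/2)) 1)"
    by (rule prod.cong[OF refl]) (simp only: flip)
  also have "\<dots> = gstring K e u"
  proof (rule gfun_string_product[OF K], intro ballI)
    fix r assume r: "r \<in> {1..K}"
    hence "K + 1 - r \<in> {1..K}" by auto
    thus "exp (u - e * ((of_nat K + 1)/2 - of_nat r)) \<noteq> 1" using nd flip[OF r] by metis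
  qed
  finally show ?thesis .
qed

text \<open>Moving the argument from the end of a string to its centre (used for the pairs
  formed with outer coordinates).\<close>
lemma gfun_recentre:
  "gfun (v + e * (of_nat K - 1)/2) (exp (e/2)) 1
   = gfun v (exp (of_nat K * e/4) * exp (e/4)) (exp (of_nat K * e/4) / exp (e/4))"
proof -
  have "exp (e/2) * exp (e * (of_nat K - 1)/2/2) = exp (of_nat K * e/4) * exp (e/4)"
    by (simp only: exp_add[symmetric]) (rule arg_cong[of _ _ exp], simp add: field_simps)
  moreover have "1 * exp (e * (of_nat K - 1)/2/2) = exp (of_nat K * e/4) / exp (e/4)"
    by (simp only: exp_diff[symmetric] mult_1) (rule arg_cong[of _ _ exp], simp add: field_simps)
  ultimately show ?thesis unfolding gfun_shift by simp
qed

text \<open>The boundary factor g(eps x_i; t_n, 1) at the end of a string, recentred.\<close>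
lemma gfun_recentre_boundary:
  "gfun (v + e * (of_nat K - 1)/2) c 1
   = gfun v (exp (of_nat K * e/4) / exp (e/4) * c) (exp (of_nat K * e/4) / exp (e/4))"
proof -
  have "exp (e * (of_nat K - 1)/2/2) = exp (of_nat K * e/4) / exp (e/4)"
    by (simp only: exp_diff[symmetric]) (rule arg_cong[of _ _ exp], simp add: field_simps)
  thus ?thesis unfolding gfun_shift by (simp add: mult.commute)
qed

definition qbracket :: "nat \<Rightarrow> complex \<Rightarrow> complex" where
  "qbracket K e = (exp (of_nat K * e/2) - inverse (exp (of_nat K * e/2))) / (exp (e/2) - inverse (exp (e/2)))"

lemma exp_pred_half:
  fixes e :: complex
  shows "1 \<le> K \<Longrightarrow> exp (of_nat (K - 1) * e/2) = exp (of_nat K * e/2) / exp (e/2)"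
  by (simp only: exp_diff[symmetric]) (rule arg_cong[of _ _ exp], simp add: of_nat_diff field_simps)

lemma gfun_qbracket:
  assumes K: "1 \<le> K" and e: "exp e \<noteq> 1"
  shows "gfun e (exp (of_nat (K - 1) * e/2)) 1 = qbracket K e"
proof -
  define T where "T = exp (e/2)"
  define Q where "Q = exp (of_nat K * e/2)"
  have nz: "T \<noteq> 0" "Q \<noteq> 0" unfolding T_def Q_def by auto
  have eT: "exp e = T * T" unfolding T_def by (simp add: exp_add[symmetric])
  have "T * T - 1 \<noteq> 0" using e eT by simp
  moreover have "T - inverse T \<noteq> 0"
    using nz \<open>T * T - 1 \<noteq> 0\<close> by (auto simp: field_simps)
  moreover have "gfun e (Q / T) 1 = (Q / T * (T * T) - T / Q) / (T * T - 1)"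
    unfolding gfun_def eT by simp
  ultimately have "gfun e (Q / T) 1 = (Q - inverse Q) / (T - inverse T)"
    using nz by (simp add: field_simps)
  thus ?thesis unfolding exp_pred_half[OF K] qbracket_def Q_def T_def .
qed

text \<open>The product over a string of the pair factors seen from its first point X_1:
  the differences telescope to [K], the sums to g(2Y; q t^{-1}, 1).\<close>
lemma string_endpoint_product:
  fixes X :: "nat \<Rightarrow> complex"
  assumes K: "1 \<le> K" and e: "exp e \<noteq> 1" and Y2: "exp (2 * Y) \<noteq> 1"
    and X: "\<forall>r\<in>{1..K}. X r = Y + e * ((of_nat K + 1)/2 - of_nat r)"
    and nd: "\<forall>r\<in>{1..K}-{1}. exp (X 1 - X r) \<noteq> 1 \<and> exp (X 1 + X r) \<noteq> 1"
  shows "(\<Prod>r\<in>{1..K}-{1}. gfun (X 1 - X r) (exp (e/2)) 1 * gfun (X 1 + X r) (exp (e/2)) 1)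
       = qbracket K e * gfun (2 * Y) (exp (of_nat K * e/2) / exp (e/2)) 1"
proof -
  have X1: "X 1 = Y + e * ((of_nat K + 1)/2 - 1)" using X K by simp
  have minus: "X 1 - X (s + 2) = e + of_nat s * e" if "s < K - 1" for s
  proof -
    have "X (s + 2) = Y + e * ((of_nat K + 1)/2 - of_nat (s + 2))" using X that by simp
    thus ?thesis unfolding X1 by (simp add: field_simps)
  qed
  have plus: "X 1 + X (K - s) = 2 * Y + of_nat s * e" if "s < K - 1" for s
  proof -
    have "X (K - s) = Y + e * ((of_nat K + 1)/2 - of_nat (K - s))" using X that by simp
    thus ?thesis unfolding X1 using that by (simp add: of_nat_diff field_simps)
  qed
  have nd_minus: "exp (e + of_nat s * e) \<noteq> 1" if "s < K - 1" for s
  proof -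
    have "s + 2 \<in> {1..K}-{1}" using that by auto
    thus ?thesis using nd minus[OF that] by metis
  qed
  have nd_plus: "exp (2 * Y + of_nat s * e) \<noteq> 1" if "s < K - 1" for s
  proof -
    have "K - s \<in> {1..K}-{1}" using that by auto
    thus ?thesis using nd plus[OF that] by metis
  qed
  have "(\<Prod>s<K-1. gfun (e + of_nat s * e) (exp (e/2)) 1) = (\<Prod>r\<in>{1..K}-{1}. gfun (X 1 - X r) (exp (e/2)) 1)"
    by (rule prod.reindex_bij_witness[where i="\<lambda>r. r - 2" and j="\<lambda>s. s + 2"]) (auto simp: minus[simplified])
  moreover have "(\<Prod>s<K-1. gfun (e + of_nat s * e) (exp (e/2)) 1) = gfun e (exp (of_nat (K - 1) * e/2)) 1"
    using e nd_minus by (intro gfun_telescope) auto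
  ultimately have left: "(\<Prod>r\<in>{1..K}-{1}. gfun (X 1 - X r) (exp (e/2)) 1) = qbracket K e"
    using gfun_qbracket[OF K e] by simp
  have "(\<Prod>s<K-1. gfun (2 * Y + of_nat s * e) (exp (e/2)) 1) = (\<Prod>r\<in>{1..K}-{1}. gfun (X 1 + X r) (exp (e/2)) 1)"
    by (rule prod.reindex_bij_witness[where i="\<lambda>r. K - r" and j="\<lambda>s. K - s"]) (auto simp: plus[simplified])
  moreover have "(\<Prod>s<K-1. gfun (2 * Y + of_nat s * e) (exp (e/2)) 1) = gfun (2 * Y) (exp (of_nat K * e/2) / exp (e/2)) 1"
    using Y2 nd_plus gfun_telescope[of "2 * Y" "K - 1" e] unfolding exp_pred_half[OF K] by auto
  ultimately have right: "(\<Prod>r\<in>{1..K}-{1}. gfun (X 1 + X r) (exp (e/2)) 1) = gfun (2 * Y) (exp (of_nat K * e/2) / exp (e/2)) 1"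
    by simp
  show ?thesis using left right by (simp add: prod.distrib)
qed

text \<open>The mirror image: seen from -X_K, which is the first point of the reflected string
  -X_{K+1-r} centred at -Y.\<close>
lemma string_endpoint_product':
  fixes X :: "nat \<Rightarrow> complex"
  assumes K: "1 \<le> K" and e: "exp e \<noteq> 1" and Y2: "exp (- 2 * Y) \<noteq> 1"
    and X: "\<forall>r\<in>{1..K}. X r = Y + e * ((of_nat K + 1)/2 - of_nat r)"
    and nd: "\<forall>r\<in>{1..K}-{K}. exp (- X K - X r) \<noteq> 1 \<and> exp (- X K + X r) \<noteq> 1"
  shows "(\<Prod>r\<in>{1..K}-{K}. gfun (- X K - X r) (exp (e/2)) 1 * gfun (- X K + X r) (exp (e/2)) 1)
       = qbracket K e * gfun (- 2 * Y) (exp (of_nat K * e/2) / exp (e/2)) 1"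
proof -
  define X' where "X' = (\<lambda>r. - X (K + 1 - r))"
  have X'_flip: "X (K + 1 - r) = - X' r" for r unfolding X'_def by simp
  have X': "\<forall>r\<in>{1..K}. X' r = - Y + e * ((of_nat K + 1)/2 - of_nat r)"
  proof
    fix r assume r: "r \<in> {1..K}"
    hence "K + 1 - r \<in> {1..K}" by auto
    hence "X (K + 1 - r) = Y + e * ((of_nat K + 1)/2 - of_nat (K + 1 - r))" using X by blast
    thus "X' r = - Y + e * ((of_nat K + 1)/2 - of_nat r)"
      unfolding X'_def using r by (simp add: of_nat_diff field_simps)
  qed
  have X'1: "X' 1 = - X K" unfolding X'_def by simp
  have "(\<Prod>r\<in>{1..K}-{1}. gfun (X' 1 - X' r) (exp (e/2)) 1 * gfun (X' 1 + X' r) (exp (e/2)) 1)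
      = (\<Prod>r\<in>{1..K}-{K}. gfun (- X K - X r) (exp (e/2)) 1 * gfun (- X K + X r) (exp (e/2)) 1)"
    by (rule prod.reindex_bij_witness[where i="\<lambda>r. K + 1 - r" and j="\<lambda>r. K + 1 - r"])
      (auto simp: X'_def algebra_simps)
  moreover have "(\<Prod>r\<in>{1..K}-{1}. gfun (X' 1 - X' r) (exp (e/2)) 1 * gfun (X' 1 + X' r) (exp (e/2)) 1)
      = qbracket K e * gfun (2 * (- Y)) (exp (of_nat K * e/2) / exp (e/2)) 1"
  proof (rule string_endpoint_product[OF K e _ X'])
    show "exp (2 * (- Y)) \<noteq> 1" using Y2 by simp
    show "\<forall>r\<in>{1..K}-{1}. exp (X' 1 - X' r) \<noteq> 1 \<and> exp (X' 1 + X' r) \<noteq> 1"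
    proof
      fix r assume r: "r \<in> {1..K}-{1}"
      hence "K + 1 - r \<in> {1..K}-{K}" by auto
      hence "exp (- X K - X (K + 1 - r)) \<noteq> 1 \<and> exp (- X K + X (K + 1 - r)) \<noteq> 1"
        using nd by blast
      thus "exp (X' 1 - X' r) \<noteq> 1 \<and> exp (X' 1 + X' r) \<noteq> 1"
        unfolding X'1 X'_flip by (simp add: algebra_simps)
    qed
  qed
  ultimately show ?thesis by simp
qed

lemma string_endpoint_product_signed:
  fixes X :: "nat \<Rightarrow> complex"
  assumes K: "1 \<le> K" and e: "exp e \<noteq> 1" and eps: "eps = 1 \<or> eps = -1"
    and r0: "r0 = (if eps = 1 then 1 else K)" and Y2: "exp (2 * eps * Y) \<noteq> 1"
    and X: "\<forall>r\<in>{1..K}. X r = Y + e * ((of_nat K + 1)/2 - of_nat r)"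
    and nd: "\<forall>r\<in>{1..K}-{r0}. exp (eps * X r0 - X r) \<noteq> 1 \<and> exp (eps * X r0 + X r) \<noteq> 1"
  shows "(\<Prod>r\<in>{1..K}-{r0}. gfun (eps * X r0 - X r) (exp (e/2)) 1 * gfun (eps * X r0 + X r) (exp (e/2)) 1)
       = qbracket K e * gfun (2 * eps * Y) (exp (of_nat K * e/2) / exp (e/2)) 1"
proof (cases "eps = 1")
  case True
  then show ?thesis using string_endpoint_product[OF K e _ X] r0 Y2 nd by simp
next
  case False
  then show ?thesis using string_endpoint_product'[OF K e _ X] eps r0 Y2 nd by simp
qed

lemma bform_diff: "bform n (\<lambda>j. a j - b j) v = bform n a v - bform n b v"
  unfolding bform_def by (simp add: sum_subtractf algebra_simps)

lemma bform_scale: "bform n (\<lambda>j. c * a j) v = c * bform n a v"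
  unfolding bform_def by (simp add: sum_distrib_left algebra_simps)

lemma bform_comm: "bform n a v = bform n v a"
  unfolding bform_def by (simp add: mult.commute)

lemma bform_evec: "i \<in> {1..n} \<Longrightarrow> bform n (evec i) v = v i"
proof -
  assume "i \<in> {1..n}"
  hence "(\<Sum>j=1..n. (if j = i then 1 else 0) * v j) = v i"
    by (simp add: if_distrib[of "\<lambda>c. c * v _"] cong: if_cong)
  thus ?thesis unfolding bform_def evec_def .
qed

text \<open>The index set {1..n} consists of N1 outer coordinates followed by m blocks of k
  consecutive coordinates; pos l r is the r-th coordinate of block l.\<close>
locale block_layout =
  fixes n m k :: nat
  assumes k_pos: "1 \<le> k" and blocks_fit: "m * k \<le> n"
begin

definition N1 :: nat where "N1 = n - m * k"

definition pos :: "nat \<Rightarrow> nat \<Rightarrow> nat" where "pos l r = N1 + k * (l - 1) + r"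

lemma n_eq: "n = N1 + m * k" using blocks_fit unfolding N1_def by simp

lemma block_end: "1 \<le> l \<Longrightarrow> k * (l - 1) + k = k * l"
  by (cases l) auto

lemma pos_le: "1 \<le> l \<Longrightarrow> l \<le> m \<Longrightarrow> r \<le> k \<Longrightarrow> pos l r \<le> n"
proof -
  assume a: "1 \<le> l" "l \<le> m" "r \<le> k"
  have "k * (l - 1) + r \<le> k * l" using block_end[OF a(1)] a(3) by simp
  also have "\<dots> \<le> m * k" using a(2) by (simp add: mult.commute)
  finally show ?thesis unfolding pos_def using n_eq by simp
qed

lemma pos_gt: "1 \<le> r \<Longrightarrow> N1 < pos l r" unfolding pos_def by simp

lemma pos_in_block: "l \<in> {1..m} \<Longrightarrow> r \<in> {1..k} \<Longrightarrow> pos l r \<in> {N1+1..n}"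
  using pos_le[of l r] pos_gt[of r l] by simp

lemma pos_Suc: "pos l (Suc r) = Suc (pos l r)" unfolding pos_def by simp

lemma pos_inj:
  assumes "1 \<le> r" "r \<le> k" "1 \<le> r'" "r' \<le> k" "1 \<le> l" "1 \<le> l'" "pos l r = pos l' r'"
  shows "l = l' \<and> r = r'"
proof -
  obtain a b a' b' where ab: "l = Suc a" "r = Suc b" "l' = Suc a'" "r' = Suc b'"
    using assms by (metis Suc_le_D One_nat_def)
  hence e: "k * a + b = k * a' + b'" using assms(7) unfolding pos_def by simp
  have "b < k" "b' < k" using assms ab by auto
  hence "(k * a + b) div k = a" "(k * a + b) mod k = b" "(k * a' + b') div k = a'" "(k * a' + b') mod k = b'"
    by auto
  thus ?thesis using e ab by metis
qed

lemma pos_surj: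
  assumes "j \<in> {N1+1..n}"
  obtains l r where "l \<in> {1..m}" "r \<in> {1..k}" "j = pos l r"
proof -
  define p where "p = j - N1 - 1"
  have "p < m * k" using assms n_eq unfolding p_def by auto
  hence "p div k < m" using k_pos by (simp add: div_less_iff_less_mult)
  moreover have "p mod k < k" using k_pos by simp
  moreover have "j = pos (p div k + 1) (p mod k + 1)"
    using assms unfolding pos_def p_def by simp
  ultimately show ?thesis using that[of "p div k + 1" "p mod k + 1"] by simp
qed

lemma blocks_image: "{N1+1..n} = (\<lambda>(l, r). pos l r) ` ({1..m} \<times> {1..k})"
proof
  show "{N1+1..n} \<subseteq> (\<lambda>(l, r). pos l r) ` ({1..m} \<times> {1..k})"
  proof
    fix j assume "j \<in> {N1+1..n}"
    then obtain l r where "l \<in> {1..m}" "r \<in> {1..k}" "j = pos l r" by (rule pos_surj)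
    thus "j \<in> (\<lambda>(l, r). pos l r) ` ({1..m} \<times> {1..k})" by force
  qed
  show "(\<lambda>(l, r). pos l r) ` ({1..m} \<times> {1..k}) \<subseteq> {N1+1..n}"
    using pos_in_block by auto
qed

lemma blocks_inj: "inj_on (\<lambda>(l, r). pos l r) ({1..m} \<times> {1..k})"
  unfolding inj_on_def using pos_inj by auto

lemma sum_blocks: "sum f {N1+1..n} = (\<Sum>l=1..m. \<Sum>r=1..k. f (pos l r))"
  unfolding blocks_image sum.reindex[OF blocks_inj] by (simp add: sum.cartesian_product case_prod_unfold)

lemma prod_blocks: "prod f {N1+1..n} = (\<Prod>l=1..m. \<Prod>r=1..k. f (pos l r))"
  unfolding blocks_image prod.reindex[OF blocks_inj] by (simp add: prod.cartesian_product case_prod_unfold)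

lemma outer_blocks_partition: "{1..n} = {1..N1} \<union> {N1+1..n}" "{1..N1} \<inter> {N1+1..n} = {}"
  using n_eq by auto

lemma sum_split: "sum f {1..n} = sum f {1..N1} + (\<Sum>l=1..m. \<Sum>r=1..k. f (pos l r))"
  unfolding outer_blocks_partition(1) sum_blocks[symmetric]
  by (rule sum.union_disjoint) (auto simp: outer_blocks_partition(2))

lemma prod_split: "prod f {1..n} = prod f {1..N1} * (\<Prod>l=1..m. \<Prod>r=1..k. f (pos l r))"
  unfolding outer_blocks_partition(1) prod_blocks[symmetric]
  by (rule prod.union_disjoint) (auto simp: outer_blocks_partition(2))

lemma prod_remove_outer:
  assumes "i \<in> {1..N1}"
  shows "prod f ({1..n} - {i}) = prod f ({1..N1} - {i}) * (\<Prod>l=1..m. \<Prod>r=1..k. f (pos l r))"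
proof -
  have "{1..n} - {i} = ({1..N1} - {i}) \<union> {N1+1..n}" using assms n_eq by auto
  moreover have "prod f (({1..N1} - {i}) \<union> {N1+1..n}) = prod f ({1..N1} - {i}) * prod f {N1+1..n}"
    by (rule prod.union_disjoint) auto
  ultimately show ?thesis unfolding prod_blocks by simp
qed

lemma prod_remove_block:
  assumes l: "l \<in> {1..m}" and r0: "r0 \<in> {1..k}"
  shows "prod f ({1..n} - {pos l r0}) = prod f {1..N1} * (\<Prod>l'\<in>{1..m}-{l}. \<Prod>r=1..k. f (pos l' r))
           * (\<Prod>r\<in>{1..k}-{r0}. f (pos l r))"
proof -
  define g where "g j = (if j = pos l r0 then 1 else f j)" for j
  have block: "(\<Prod>r=1..k. g (pos l' r)) = (if l' = l then (\<Prod>r\<in>{1..k}-{r0}. f (pos l r)) else (\<Prod>r=1..k. f (pos l' r)))"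
    if "l' \<in> {1..m}" for l'
  proof -
    have same: "pos l' r = pos l r0 \<longleftrightarrow> l' = l \<and> r = r0" if "r \<in> {1..k}" for r
      using pos_inj[of r r0 l' l] that \<open>l' \<in> {1..m}\<close> l r0 by auto
    have "(\<Prod>r=1..k. g (pos l' r)) = (\<Prod>r=1..k. if l' = l \<and> r = r0 then 1 else f (pos l' r))"
      unfolding g_def by (rule prod.cong) (simp_all add: same)
    also have "\<dots> = (if l' = l then (\<Prod>r\<in>{1..k}-{r0}. f (pos l r)) else (\<Prod>r=1..k. f (pos l' r)))"
      using r0 by (simp add: prod.remove)
    finally show ?thesis .
  qed
  have "prod f ({1..n} - {pos l r0}) = prod g {1..n}"
    unfolding g_def by (simp add: prod.If_cases Diff_eq)
  also have "\<dots> = prod g {1..N1} * (\<Prod>l'=1..m. \<Prod>r=1..k. g (pos l' r))" by (rule prod_split)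
  also have "prod g {1..N1} = prod f {1..N1}"
    using pos_gt[of r0 l] r0 unfolding g_def by (intro prod.cong) auto
  also have "(\<Prod>l'=1..m. \<Prod>r=1..k. g (pos l' r))
      = (\<Prod>r\<in>{1..k}-{r0}. f (pos l r)) * (\<Prod>l'\<in>{1..m}-{l}. \<Prod>r=1..k. f (pos l' r))"
  proof -
    have "(\<Prod>l'=1..m. \<Prod>r=1..k. g (pos l' r)) = (\<Prod>r=1..k. g (pos l r)) * (\<Prod>l'\<in>{1..m}-{l}. \<Prod>r=1..k. g (pos l' r))"
      by (rule prod.remove[OF finite_atLeastAtMost l])
    also have "(\<Prod>l'\<in>{1..m}-{l}. \<Prod>r=1..k. g (pos l' r)) = (\<Prod>l'\<in>{1..m}-{l}. \<Prod>r=1..k. f (pos l' r))"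
    proof (rule prod.cong[OF refl])
      fix l' assume "l' \<in> {1..m}-{l}"
      thus "(\<Prod>r=1..k. g (pos l' r)) = (\<Prod>r=1..k. f (pos l' r))" using block[of l'] by simp
    qed
    finally show ?thesis using block[OF l] by simp
  qed
  finally show ?thesis by (simp add: ac_simps)
qed

lemma S0idx_char: "a \<in> S0idx n m k \<longleftrightarrow> (\<exists>l r. l \<in> {1..m} \<and> 1 \<le> r \<and> r < k \<and> a = pos l r)"
proof
  assume "a \<in> S0idx n m k"
  thus "\<exists>l r. l \<in> {1..m} \<and> 1 \<le> r \<and> r < k \<and> a = pos l r"
    unfolding S0idx_def pos_def N1_def by auto
next
  assume "\<exists>l r. l \<in> {1..m} \<and> 1 \<le> r \<and> r < k \<and> a = pos l r"
  then obtain l r where "l \<in> {1..m}" "1 \<le> r" "r < k" "a = pos l r" by blast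
  thus "a \<in> S0idx n m k"
    unfolding S0idx_def pos_def N1_def by (intro CollectI exI[of _ l] exI[of _ r]) auto
qed

lemma pos_S0idx: "l \<in> {1..m} \<Longrightarrow> 1 \<le> r \<Longrightarrow> r < k \<Longrightarrow> pos l r \<in> S0idx n m k"
  unfolding S0idx_char by blast

lemma S0_range: "a \<in> S0idx n m k \<Longrightarrow> a \<in> {N1+1..n} \<and> a + 1 \<in> {N1+1..n}"
proof -
  assume "a \<in> S0idx n m k"
  then obtain l r where "l \<in> {1..m}" "1 \<le> r" "r < k" "a = pos l r" unfolding S0idx_char by blast
  thus ?thesis using pos_in_block[of l r] pos_in_block[of l "Suc r"] pos_Suc[of l r] by simp
qed

lemma Vbar_iff: "v \<in> Vbar n m k \<longleftrightarrow> v \<in> Vsp n \<and> (\<forall>a\<in>S0idx n m k. v a = v (a + 1))"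
proof -
  have "bform n (\<lambda>j. evec a j - evec (a + 1) j) v = v a - v (a + 1)" if "a \<in> S0idx n m k" for a
    using S0_range[OF that] n_eq by (simp add: bform_diff bform_evec)
  thus ?thesis unfolding Vbar_def S0_def by auto
qed

lemma Vbar_block_const:
  assumes v: "v \<in> Vbar n m k" and l: "l \<in> {1..m}" and r: "r \<in> {1..k}"
  shows "v (pos l r) = v (pos l 1)"
  using r
proof (induction r)
  case (Suc r)
  show ?case
  proof (cases "r = 0")
    case False
    hence "pos l r \<in> S0idx n m k" using Suc.prems l by (intro pos_S0idx) auto
    hence "v (pos l r) = v (pos l (Suc r))" using v Vbar_iff pos_Suc by auto
    thus ?thesis using Suc False by auto
  qed simp
qed simp

lemma ublock_pos:
  assumes "l \<in> {1..m}" "l' \<in> {1..m}" "r \<in> {1..k}"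
  shows "ublock n m k l (pos l' r) = (if l' = l then 1 / of_nat k else 0)"
proof -
  have "pos l' r \<in> {N1 + k * (l - 1) + 1 .. N1 + k * l} \<longleftrightarrow> l' = l"
  proof
    assume mem: "pos l' r \<in> {N1 + k * (l - 1) + 1 .. N1 + k * l}"
    define r' where "r' = pos l' r - (N1 + k * (l - 1))"
    have "pos l' r = pos l r'" "1 \<le> r'" "r' \<le> k"
      using mem block_end[of l] assms unfolding r'_def pos_def by auto
    thus "l' = l" using pos_inj assms by (metis atLeastAtMost_iff)
  next
    assume "l' = l"
    thus "pos l' r \<in> {N1 + k * (l - 1) + 1 .. N1 + k * l}"
      using assms block_end[of l] unfolding pos_def by auto
  qed
  thus ?thesis unfolding ublock_def N1_def by simp
qed

lemma ublock_outer: "j \<le> N1 \<Longrightarrow> ublock n m k l j = 0"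
  unfolding ublock_def N1_def by auto

lemma ublock_outside: "j \<notin> {1..n} \<Longrightarrow> l \<in> {1..m} \<Longrightarrow> ublock n m k l j = 0"
proof -
  assume a: "j \<notin> {1..n}" "l \<in> {1..m}"
  have "pos l k \<le> n" using a by (intro pos_le) auto
  hence "N1 + k * l \<le> n" using block_end[of l] a unfolding pos_def by simp
  thus ?thesis using a unfolding ublock_def N1_def by auto
qed

lemma evec_Vbar: "i \<in> {1..N1} \<Longrightarrow> (\<lambda>j. c * evec i j) \<in> Vbar n m k"
  unfolding Vbar_iff Vsp_def using S0_range n_eq unfolding evec_def by fastforce

lemma ublock_Vbar:
  assumes l: "l \<in> {1..m}"
  shows "(\<lambda>j. c * ublock n m k l j) \<in> Vbar n m k"
  unfolding Vbar_iff Vsp_def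
proof (intro conjI ballI CollectI allI impI)
  fix j assume "j \<notin> {1..n}" thus "c * ublock n m k l j = 0" using ublock_outside l by simp
next
  fix a assume "a \<in> S0idx n m k"
  then obtain l' r where lr: "l' \<in> {1..m}" "1 \<le> r" "r < k" "a = pos l' r"
    unfolding S0idx_char by blast
  have "a + 1 = pos l' (Suc r)" using lr pos_Suc by simp
  thus "c * ublock n m k l a = c * ublock n m k l (a + 1)"
    using lr l ublock_pos[of l l' r] ublock_pos[of l l' "Suc r"] by simp
qed

lemma bform_ublock:
  assumes l: "l \<in> {1..m}"
  shows "bform n v (ublock n m k l) = (1 / of_nat k) * (\<Sum>r=1..k. v (pos l r))"
proof -
  have "bform n v (ublock n m k l) = (\<Sum>j=1..N1. v j * ublock n m k l j)
        + (\<Sum>l'=1..m. \<Sum>r=1..k. v (pos l' r) * ublock n m k l (pos l' r))"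
    unfolding bform_def by (rule sum_split)
  also have "(\<Sum>j=1..N1. v j * ublock n m k l j) = 0" using ublock_outer by simp
  also have "(\<Sum>l'=1..m. \<Sum>r=1..k. v (pos l' r) * ublock n m k l (pos l' r))
     = (\<Sum>l'=1..m. if l' = l then (\<Sum>r=1..k. v (pos l r) * (1 / of_nat k)) else 0)"
    using ublock_pos[OF l] by (intro sum.cong) auto
  also have "\<dots> = (\<Sum>r=1..k. v (pos l r) * (1 / of_nat k))" using l by simp
  finally show ?thesis by (simp add: sum_distrib_left mult.commute)
qed

lemma bform_block_const:
  assumes v: "v \<in> Vbar n m k" and l: "l \<in> {1..m}"
  shows "bform n v (ublock n m k l) = v (pos l 1)"
proof -
  have "(\<Sum>r=1..k. v (pos l r)) = (\<Sum>r=1..k. v (pos l 1))"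
    by (rule sum.cong[OF refl]) (rule Vbar_block_const[OF v l])
  hence "(\<Sum>r=1..k. v (pos l r)) = of_nat k * v (pos l 1)" by simp
  thus ?thesis unfolding bform_ublock[OF l] using k_pos by simp
qed

text \<open>The orthogonal complement of Vbar meets Vbar only in zero: Vbar has a basis of
  coordinate vectors e_i (i outside the blocks) and block indicators.\<close>
lemma Vbar_orth_zero:
  assumes d: "d \<in> Vbar n m k" and orth: "\<forall>v\<in>Vbar n m k. bform n d v = 0"
  shows "d = (\<lambda>j. 0)"
proof
  fix j
  show "d j = 0"
  proof (cases "j \<in> {1..n}")
    case False
    thus ?thesis using d unfolding Vbar_def Vsp_def by blast
  next
    case j: True
    show ?thesis
    proof (cases "j \<le> N1")
      case True
      hence "(\<lambda>i. 1 * evec j i) \<in> Vbar n m k" using j by (intro evec_Vbar) simp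
      hence "bform n d (evec j) = 0" using orth by simp
      thus ?thesis using bform_evec[OF j, of d] by (simp add: bform_comm)
    next
      case False
      hence "j \<in> {N1+1..n}" using j by simp
      then obtain l r where lr: "l \<in> {1..m}" "r \<in> {1..k}" "j = pos l r" by (rule pos_surj)
      have "bform n d (ublock n m k l) = 0"
        using orth ublock_Vbar[OF lr(1), of 1] by simp
      thus ?thesis using bform_block_const[OF d lr(1)] Vbar_block_const[OF d lr(1,2)] lr(3) by simp
    qed
  qed
qed

lemma proj_eq:
  assumes mu: "mu \<in> Vbar n m k" and orth: "\<forall>v\<in>Vbar n m k. bform n (\<lambda>j. lam j - mu j) v = 0"
  shows "proj n m k lam = mu"
  unfolding proj_def
proof (rule the_equality)
  show "mu \<in> Vbar n m k \<and> (\<forall>v\<in>Vbar n m k. bform n (\<lambda>j. lam j - mu j) v = 0)" using mu orth by simp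
next
  fix mu' assume mu': "mu' \<in> Vbar n m k \<and> (\<forall>v\<in>Vbar n m k. bform n (\<lambda>j. lam j - mu' j) v = 0)"
  have "(\<lambda>j. mu' j - mu j) \<in> Vbar n m k" using mu mu' unfolding Vbar_iff Vsp_def by simp
  moreover have "\<forall>v\<in>Vbar n m k. bform n (\<lambda>j. mu' j - mu j) v = 0"
  proof
    fix v assume v: "v \<in> Vbar n m k"
    have "(\<lambda>j. mu' j - mu j) = (\<lambda>j. (lam j - mu j) - (lam j - mu' j))" by simp
    thus "bform n (\<lambda>j. mu' j - mu j) v = 0" using orth mu' v by (simp only: bform_diff) simp
  qed
  ultimately have "(\<lambda>j. mu' j - mu j) = (\<lambda>j. 0)" by (rule Vbar_orth_zero)
  thus "mu' = mu" by (simp add: fun_eq_iff)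
qed

lemma proj_evec_outer: "i \<in> {1..N1} \<Longrightarrow> proj n m k (\<lambda>j. c * evec i j) = (\<lambda>j. c * evec i j)"
  by (rule proj_eq[OF evec_Vbar]) (simp_all add: bform_def)

lemma proj_evec_block:
  assumes l: "l \<in> {1..m}" and r: "r \<in> {1..k}"
  shows "proj n m k (\<lambda>j. c * evec (pos l r) j) = (\<lambda>j. c * ublock n m k l j)"
proof (rule proj_eq[OF ublock_Vbar[OF l]], intro ballI)
  fix v assume v: "v \<in> Vbar n m k"
  have pr: "pos l r \<in> {1..n}" using pos_in_block[OF l r] by simp
  have "bform n (\<lambda>j. c * evec (pos l r) j - c * ublock n m k l j) v
      = c * v (pos l r) - c * bform n v (ublock n m k l)"
    by (simp only: bform_diff bform_scale bform_evec[OF pr] bform_comm[of n "ublock n m k l"])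
  thus "bform n (\<lambda>j. c * evec (pos l r) j - c * ublock n m k l j) v = 0"
    using bform_block_const[OF v l] Vbar_block_const[OF v l r] by simp
qed

end

lemma signs_iff: "eps \<in> signs \<longleftrightarrow> eps = 1 \<or> eps = -1"
  unfolding signs_def by auto

lemma MLam_finite: "finite (MLam n)"
proof -
  have "MLam n \<subseteq> (\<lambda>(i, eps). (\<lambda>j. eps * evec i j)) ` ({1..n} \<times> signs)"
    unfolding MLam_def by auto
  moreover have "finite ({1..n} \<times> signs)" unfolding signs_def by simp
  ultimately show ?thesis using finite_subset by blast
qed

lemma restr_coef_Mcoef:
  "restr_coef n m k (MLam n) (Mcoef n t tn) lam' x
   = (\<Sum>i=1..n. \<Sum>eps\<in>signs. if proj n m k (\<lambda>j. eps * evec i j) = lam' then Mterm n t tn i eps x else 0)"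
proof -
  define L where "L = {lam \<in> MLam n. proj n m k lam = lam'}"
  have L: "finite L" unfolding L_def using MLam_finite by simp
  have "restr_coef n m k (MLam n) (Mcoef n t tn) lam' x
      = (\<Sum>i=1..n. \<Sum>eps\<in>signs. \<Sum>lam\<in>L. if lam = (\<lambda>j. eps * evec i j) then Mterm n t tn i eps x else 0)"
    unfolding restr_coef_def Mcoef_def L_def[symmetric]
    by (subst sum.swap, rule sum.cong[OF refl], subst sum.swap, rule refl)
  also have "\<dots> = (\<Sum>i=1..n. \<Sum>eps\<in>signs. if proj n m k (\<lambda>j. eps * evec i j) = lam' then Mterm n t tn i eps x else 0)"
  proof (intro sum.cong[OF refl])
    fix i eps assume "i \<in> {1..n}" "eps \<in> signs"
    hence "(\<lambda>j. eps * evec i j) \<in> L \<longleftrightarrow> proj n m k (\<lambda>j. eps * evec i j) = lam'"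
      unfolding L_def MLam_def by blast
    thus "(\<Sum>lam\<in>L. if lam = (\<lambda>j. eps * evec i j) then Mterm n t tn i eps x else 0)
       = (if proj n m k (\<lambda>j. eps * evec i j) = lam' then Mterm n t tn i eps x else 0)"
      using L by simp
  qed
  finally show ?thesis .
qed

text \<open>The non-resonance hypothesis hbar not in pi i Q excludes exp eta1 = 1.\<close>
lemma exp_eq_1_imp:
  fixes z :: complex
  assumes "exp z = 1"
  obtains n :: int where "z = \<i> * complex_of_real (of_int n * 2 * pi)"
proof -
  have "exp (Re z) = 1" using norm_exp_eq_Re[of z] assms by simp
  hence re: "Re z = 0" by simp
  have "cos (Im z) = 1" using Re_exp[of z] assms re by simp
  then obtain n :: int where "Im z = of_int n * 2 * pi" unfolding cos_one_2pi_int by blast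
  hence "z = \<i> * complex_of_real (of_int n * 2 * pi)" using re by (simp add: complex_eq_iff)
  thus ?thesis by (rule that)
qed

lemma exp_ne_1_of_hbar_generic:
  fixes k :: nat and eta1 :: complex
  assumes "\<forall>r\<in>\<rat>. of_nat k * eta1 \<noteq> \<i> * complex_of_real (pi * r)"
  shows "exp eta1 \<noteq> 1"
proof
  assume "exp eta1 = 1"
  then obtain z :: int where "eta1 = \<i> * complex_of_real (of_int z * 2 * pi)" by (rule exp_eq_1_imp)
  hence "of_nat k * eta1 = \<i> * complex_of_real (pi * of_int (2 * z * int k))"
    by (simp add: algebra_simps)
  moreover have "(of_int (2 * z * int k) :: real) \<in> \<rat>" by simp
  ultimately show False using assms by blast
qed

locale generic_point = block_layout +
  fixes eta tn :: complex and x :: cvec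
  assumes x_D0: "x \<in> D0 n m k eta"
    and generic: "generic_pt n m k eta x"
    and eta_generic: "exp eta \<noteq> 1"
begin

definition y :: "nat \<Rightarrow> complex" where "y = ycoord n m k x"

lemma x_step: "l \<in> {1..m} \<Longrightarrow> 1 \<le> r \<Longrightarrow> r < k \<Longrightarrow> x (pos l r) - x (pos l (Suc r)) = eta"
  using x_D0 pos_S0idx[of l r] unfolding D0_def pos_Suc by auto

lemma x_along_block: "l \<in> {1..m} \<Longrightarrow> r \<in> {1..k} \<Longrightarrow> x (pos l r) = x (pos l 1) - of_nat (r - 1) * eta"
proof (induction r)
  case (Suc r)
  show ?case
  proof (cases "r = 0")
    case False
    hence "x (pos l r) = x (pos l 1) - of_nat (r - 1) * eta" using Suc by auto
    moreover have "x (pos l r) - x (pos l (Suc r)) = eta" using Suc False by (intro x_step) auto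
    ultimately show ?thesis using False by (cases r) (auto simp: algebra_simps)
  qed simp
qed simp

lemma y_block_mean: "l \<in> {1..m} \<Longrightarrow> y l = (1 / of_nat k) * (\<Sum>r=1..k. x (pos l r))"
proof -
  assume l: "l \<in> {1..m}"
  have idx: "N1 + k * l - s = pos l (k - s)" if "s \<le> k - 1" for s
    using that k_pos block_end[of l] l unfolding pos_def by auto
  have "(\<Sum>s=0..k-1. x (N1 + k * l - s)) = (\<Sum>r=1..k. x (pos l r))"
    by (rule sum.reindex_bij_witness[where i="\<lambda>r. k - r" and j="\<lambda>s. k - s"]) (use idx k_pos in auto)
  thus ?thesis unfolding y_def ycoord_def N1_def by simp
qed

lemma x_block: "l \<in> {1..m} \<Longrightarrow> r \<in> {1..k} \<Longrightarrow> x (pos l r) = y l + eta * ((of_nat k + 1)/2 - of_nat r)"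
proof -
  assume l: "l \<in> {1..m}" and r: "r \<in> {1..k}"
  define c where "c = x (pos l 1) - eta * (of_nat k - 1)/2"
  have string: "x (pos l r) = c + eta * ((of_nat k + 1)/2 - of_nat r)" if "r \<in> {1..k}" for r
  proof -
    have "of_nat (r - 1) = (of_nat r - 1 :: complex)" using that by (simp add: of_nat_diff)
    thus ?thesis unfolding x_along_block[OF l that] c_def by (simp only:) (simp add: field_simps)
  qed
  have "(\<Sum>r=1..k. x (pos l r)) = of_nat k * c + eta * (of_nat k * (of_nat k + 1)/2 - (\<Sum>r=1..k. of_nat r))"
    by (simp add: string sum.distrib sum_subtractf sum_distrib_left algebra_simps)
  also have "(\<Sum>r=1..k. of_nat r) = (of_nat k * (of_nat k + 1)/2 :: complex)"
    using double_gauss_sum_from_Suc_0[of k, where 'a=complex] by (simp add: mult.commute)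
  finally have "y l = c" unfolding y_block_mean[OF l] using k_pos by simp
  thus ?thesis using string[OF r] by simp
qed

lemma generic_pair:
  "i \<in> {1..n} \<Longrightarrow> eps \<in> signs \<Longrightarrow> j \<in> {1..n} - {i} \<Longrightarrow>
    exp (eps * x i - x j) \<noteq> 1 \<and> exp (eps * x i + x j) \<noteq> 1"
  using generic unfolding generic_pt_def Let_def gok_def by auto

lemma generic_double: "l \<in> {1..m} \<Longrightarrow> eps \<in> signs \<Longrightarrow> exp (2 * eps * y l) \<noteq> 1"
  using generic unfolding generic_pt_def Let_def gok_def y_def by auto

definition pairg :: "nat \<Rightarrow> complex \<Rightarrow> nat \<Rightarrow> complex" where
  "pairg i eps j = gfun (eps * x i - x j) (exp (eta/2)) 1 * gfun (eps * x i + x j) (exp (eta/2)) 1"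

lemma Mterm_pairg: "Mterm n (exp (eta/2)) tn i eps x = (\<Prod>j\<in>{1..n}-{i}. pairg i eps j) * gfun (eps * x i) tn 1"
  unfolding Mterm_def pairg_def ..

lemma pairg_block:
  assumes i: "i \<in> {1..n}" and eps: "eps \<in> signs" and l: "l \<in> {1..m}"
    and apart: "\<forall>r\<in>{1..k}. pos l r \<noteq> i"
  shows "(\<Prod>r=1..k. pairg i eps (pos l r)) = gstring k eta (eps * x i - y l) * gstring k eta (eps * x i + y l)"
proof -
  let ?w = "eps * x i" and ?c = "\<lambda>r. eta * ((of_nat k + 1)/2 - of_nat r)"
  have minus: "?w - x (pos l r) = (?w - y l) - ?c r" and plus: "?w + x (pos l r) = (?w + y l) + ?c r"
    if "r \<in> {1..k}" for r
    using x_block[OF l that] by (simp_all add: algebra_simps)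
  have nd: "exp (?w - x (pos l r)) \<noteq> 1 \<and> exp (?w + x (pos l r)) \<noteq> 1" if "r \<in> {1..k}" for r
    using generic_pair[OF i eps] pos_in_block[OF l that] apart that by auto
  have "(\<Prod>r=1..k. gfun (?w - x (pos l r)) (exp (eta/2)) 1) = (\<Prod>r=1..k. gfun ((?w - y l) - ?c r) (exp (eta/2)) 1)"
    by (rule prod.cong[OF refl]) (simp only: minus)
  also have "\<dots> = gstring k eta (?w - y l)"
    using nd minus by (intro gfun_string_product k_pos) auto
  finally have left: "(\<Prod>r=1..k. gfun (?w - x (pos l r)) (exp (eta/2)) 1) = gstring k eta (?w - y l)" .
  have "(\<Prod>r=1..k. gfun (?w + x (pos l r)) (exp (eta/2)) 1) = (\<Prod>r=1..k. gfun ((?w + y l) + ?c r) (exp (eta/2)) 1)"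
    by (rule prod.cong[OF refl]) (simp only: plus)
  also have "\<dots> = gstring k eta (?w + y l)"
    using nd plus by (intro gfun_string_product' k_pos) auto
  finally show ?thesis using left unfolding pairg_def prod.distrib by simp
qed

text \<open>Inside a block only the end of the string survives the shift in direction eps:
  every other position has a neighbour j with eps * x_i -+ x_j = -eta, a zero of g.\<close>
lemma Mterm_vanishes:
  assumes l: "l \<in> {1..m}" and r: "r \<in> {1..k}" and eps: "eps \<in> signs"
    and not_end: "r \<noteq> (if eps = 1 then 1 else k)"
  shows "Mterm n (exp (eta/2)) tn (pos l r) eps x = 0"
proof -
  let ?i = "pos l r"
  obtain j where j: "j \<in> {1..n} - {?i}" and zero: "pairg ?i eps j = 0"
  proof (cases "eps = 1")
    case True
    hence r2: "2 \<le> r" using not_end r by auto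
    define j where "j = pos l (r - 1)"
    have ij: "?i = Suc j" unfolding j_def using r2 pos_Suc[of l "r - 1"] by (simp add: Suc_diff_1)
    have "r - 1 \<in> {1..k}" using r r2 by auto
    hence "j \<in> {1..n} - {?i}" using pos_in_block[OF l] ij unfolding j_def by force
    moreover have "Suc (r - 1) = r" using r2 by simp
    hence "x j - x ?i = eta" using x_step[OF l, of "r - 1"] r r2 unfolding j_def by simp
    hence "gfun (eps * x ?i - x j) (exp (eta/2)) 1 = 0" using True gfun_root[of eta] by (simp add: algebra_simps)
    ultimately show ?thesis using that unfolding pairg_def by auto
  next
    case False
    hence em: "eps = -1" and rk: "r < k" using eps not_end r unfolding signs_iff by auto
    define j where "j = pos l (Suc r)"
    have "j \<in> {1..n} - {?i}" using pos_in_block[OF l, of "Suc r"] r rk pos_Suc unfolding j_def by auto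
    moreover have "x ?i - x j = eta" using x_step[OF l, of r] r rk unfolding j_def by simp
    hence "gfun (eps * x ?i + x j) (exp (eta/2)) 1 = 0" using em gfun_root[of eta] by (simp add: algebra_simps)
    ultimately show ?thesis using that unfolding pairg_def by auto
  qed
  thus ?thesis unfolding Mterm_pairg using prod_zero[of "{1..n} - {?i}"] by force
qed

lemma Mterm_outer:
  assumes i: "i \<in> {1..N1}" and eps: "eps \<in> signs"
  shows "Mterm n (exp (eta/2)) tn i eps x = Acoef n m k eta tn i eps x"
proof -
  have iN: "i \<in> {1..n}" using i n_eq by auto
  have blocks: "(\<Prod>r=1..k. pairg i eps (pos l r)) = gstring k eta (eps * x i - y l) * gstring k eta (eps * x i + y l)"
    if "l \<in> {1..m}" for l
    using pos_gt[of _ l] i by (intro pairg_block[OF iN eps that]) fastforce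
  have "Mterm n (exp (eta/2)) tn i eps x
      = (\<Prod>j\<in>{1..N1}-{i}. pairg i eps j) * (\<Prod>l=1..m. gstring k eta (eps * x i - y l) * gstring k eta (eps * x i + y l))
        * gfun (eps * x i) tn 1"
    unfolding Mterm_pairg prod_remove_outer[OF i] using blocks by simp
  thus ?thesis unfolding Acoef_def Let_def gstring_def pairg_def y_def N1_def by simp
qed

lemma Mterm_endpoint:
  assumes l: "l \<in> {1..m}" and eps: "eps \<in> signs"
  shows "Mterm n (exp (eta/2)) tn (pos l (if eps = 1 then 1 else k)) eps x
       = qbracket k eta * Bcoef n m k eta tn l eps x"
proof -
  define r0 where "r0 = (if eps = 1 then 1 else k)"
  define i where "i = pos l r0"
  define d where "d = eta * (of_nat k - 1)/2"
  have r0: "r0 \<in> {1..k}" unfolding r0_def using k_pos by auto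
  have iN: "i \<in> {1..n}" unfolding i_def using pos_in_block[OF l r0] by simp
  have wx: "eps * x i = eps * y l + d"
    using eps x_block[OF l r0] unfolding i_def r0_def d_def signs_iff
    by (auto simp: field_simps split: if_splits)
  have apart: "pos l' r = i \<longleftrightarrow> l' = l \<and> r = r0" if "l' \<in> {1..m}" "r \<in> {1..k}" for l' r
    using pos_inj[of r r0 l' l] that l r0 unfolding i_def by auto
  have outer: "(\<Prod>j\<in>{1..N1}. pairg i eps j)
      = (\<Prod>j=1..N1. gfun (eps * y l - x j) (exp (of_nat k * eta/4) * exp (eta/4)) (exp (of_nat k * eta/4) / exp (eta/4))
                  * gfun (eps * y l + x j) (exp (of_nat k * eta/4) * exp (eta/4)) (exp (of_nat k * eta/4) / exp (eta/4)))"
  proof (rule prod.cong[OF refl])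
    fix j
    have "eps * x i - x j = (eps * y l - x j) + d" "eps * x i + x j = (eps * y l + x j) + d"
      unfolding wx by simp_all
    thus "pairg i eps j = gfun (eps * y l - x j) (exp (of_nat k * eta/4) * exp (eta/4)) (exp (of_nat k * eta/4) / exp (eta/4))
                  * gfun (eps * y l + x j) (exp (of_nat k * eta/4) * exp (eta/4)) (exp (of_nat k * eta/4) / exp (eta/4))"
      unfolding pairg_def by (simp only:) (simp only: d_def gfun_recentre)
  qed
  have others: "(\<Prod>r=1..k. pairg i eps (pos l' r))
      = gfun (eps * y l - y l') (exp (of_nat k * eta/2)) 1 * gfun (eps * y l + y l') (exp (of_nat k * eta/2)) 1"
    if l': "l' \<in> {1..m} - {l}" for l'
  proof -
    have "(\<Prod>r=1..k. pairg i eps (pos l' r)) = gstring k eta (eps * x i - y l') * gstring k eta (eps * x i + y l')"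
      using l' apart by (intro pairg_block[OF iN eps]) auto
    also have "\<dots> = gstring k eta ((eps * y l - y l') + d) * gstring k eta ((eps * y l + y l') + d)"
      unfolding wx by (simp add: algebra_simps)
    finally show ?thesis unfolding d_def gstring_shift .
  qed
  have others_all: "(\<Prod>l'\<in>{1..m}-{l}. \<Prod>r=1..k. pairg i eps (pos l' r))
      = (\<Prod>l'\<in>{1..m}-{l}. gfun (eps * y l - y l') (exp (of_nat k * eta/2)) 1 * gfun (eps * y l + y l') (exp (of_nat k * eta/2)) 1)"
    by (rule prod.cong[OF refl]) (rule others)
  have own: "(\<Prod>r\<in>{1..k}-{r0}. pairg i eps (pos l r))
      = qbracket k eta * gfun (2 * eps * y l) (exp (of_nat k * eta/2) / exp (eta/2)) 1"
    unfolding pairg_def i_def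
  proof (rule string_endpoint_product_signed[where X="\<lambda>r. x (pos l r)"])
    show "1 \<le> k" "exp eta \<noteq> 1" "eps = 1 \<or> eps = -1" "r0 = (if eps = 1 then 1 else k)"
      using k_pos eta_generic eps r0_def unfolding signs_iff by simp_all
    show "exp (2 * eps * y l) \<noteq> 1" by (rule generic_double[OF l eps])
    show "\<forall>r\<in>{1..k}. x (pos l r) = y l + eta * ((of_nat k + 1)/2 - of_nat r)"
      using x_block[OF l] by blast
    show "\<forall>r\<in>{1..k}-{r0}. exp (eps * x (pos l r0) - x (pos l r)) \<noteq> 1 \<and> exp (eps * x (pos l r0) + x (pos l r)) \<noteq> 1"
    proof
      fix r assume r: "r \<in> {1..k}-{r0}"
      hence "pos l r \<in> {1..n} - {i}" using pos_in_block[OF l] apart[OF l] by force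
      thus "exp (eps * x (pos l r0) - x (pos l r)) \<noteq> 1 \<and> exp (eps * x (pos l r0) + x (pos l r)) \<noteq> 1"
        using generic_pair[OF iN eps] unfolding i_def by blast
    qed
  qed
  have boundary: "gfun (eps * x i) tn 1
      = gfun (eps * y l) (exp (of_nat k * eta/4) / exp (eta/4) * tn) (exp (of_nat k * eta/4) / exp (eta/4))"
    unfolding wx d_def gfun_recentre_boundary ..
  have "Mterm n (exp (eta/2)) tn i eps x
      = (\<Prod>j\<in>{1..N1}. pairg i eps j) * (\<Prod>l'\<in>{1..m}-{l}. \<Prod>r=1..k. pairg i eps (pos l' r))
        * (\<Prod>r\<in>{1..k}-{r0}. pairg i eps (pos l r)) * gfun (eps * x i) tn 1"
    unfolding Mterm_pairg i_def prod_remove_block[OF l r0] ..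
  also have "\<dots> = qbracket k eta * Bcoef n m k eta tn l eps x"
    unfolding outer others_all own boundary
    unfolding Bcoef_def Let_def y_def N1_def by (simp add: ac_simps)
  finally show ?thesis unfolding i_def r0_def .
qed

lemma Mterm_block_sum:
  assumes l: "l \<in> {1..m}" and eps: "eps \<in> signs"
  shows "(\<Sum>r=1..k. Mterm n (exp (eta/2)) tn (pos l r) eps x) = qbracket k eta * Bcoef n m k eta tn l eps x"
proof -
  define r0 where "r0 = (if eps = 1 then 1 else k)"
  have r0: "r0 \<in> {1..k}" unfolding r0_def using k_pos by auto
  have "(\<Sum>r=1..k. Mterm n (exp (eta/2)) tn (pos l r) eps x)
      = Mterm n (exp (eta/2)) tn (pos l r0) eps x + (\<Sum>r\<in>{1..k}-{r0}. Mterm n (exp (eta/2)) tn (pos l r) eps x)"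
    by (rule sum.remove[OF finite_atLeastAtMost r0])
  also have "(\<Sum>r\<in>{1..k}-{r0}. Mterm n (exp (eta/2)) tn (pos l r) eps x) = 0"
    using Mterm_vanishes[OF l _ eps] unfolding r0_def by (intro sum.neutral) auto
  finally show ?thesis using Mterm_endpoint[OF l eps] unfolding r0_def by simp
qed

definition restr_term :: "cvec \<Rightarrow> nat \<Rightarrow> complex" where
  "restr_term lam' i = (\<Sum>eps\<in>signs. if proj n m k (\<lambda>j. eps * evec i j) = lam' then Mterm n (exp (eta/2)) tn i eps x else 0)"

lemma outer_contribution:
  "i \<in> {1..N1} \<Longrightarrow> restr_term lam' i
     = (\<Sum>eps\<in>signs. if lam' = (\<lambda>j. eps * evec i j) then Acoef n m k eta tn i eps x else 0)"
  unfolding restr_term_def using proj_evec_outer Mterm_outer by (intro sum.cong) auto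

lemma block_contribution:
  assumes l: "l \<in> {1..m}"
  shows "(\<Sum>r=1..k. restr_term lam' (pos l r))
     = (\<Sum>eps\<in>signs. if lam' = (\<lambda>j. eps * ublock n m k l j) then qbracket k eta * Bcoef n m k eta tn l eps x else 0)"
proof -
  have "(\<Sum>r=1..k. restr_term lam' (pos l r))
      = (\<Sum>r=1..k. \<Sum>eps\<in>signs. if lam' = (\<lambda>j. eps * ublock n m k l j) then Mterm n (exp (eta/2)) tn (pos l r) eps x else 0)"
    unfolding restr_term_def using proj_evec_block[OF l] by (intro sum.cong) auto
  also have "\<dots> = (\<Sum>eps\<in>signs. if lam' = (\<lambda>j. eps * ublock n m k l j) then (\<Sum>r=1..k. Mterm n (exp (eta/2)) tn (pos l r) eps x) else 0)"
  proof -
    have "(\<Sum>r=1..k. \<Sum>eps\<in>signs. if lam' = (\<lambda>j. eps * ublock n m k l j) then Mterm n (exp (eta/2)) tn (pos l r) eps x else 0)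
        = (\<Sum>eps\<in>signs. \<Sum>r=1..k. if lam' = (\<lambda>j. eps * ublock n m k l j) then Mterm n (exp (eta/2)) tn (pos l r) eps x else 0)"
      by (rule sum.swap)
    also have "\<dots> = (\<Sum>eps\<in>signs. if lam' = (\<lambda>j. eps * ublock n m k l j) then (\<Sum>r=1..k. Mterm n (exp (eta/2)) tn (pos l r) eps x) else 0)"
      by (rule sum.cong[OF refl]) simp
    finally show ?thesis .
  qed
  also have "\<dots> = (\<Sum>eps\<in>signs. if lam' = (\<lambda>j. eps * ublock n m k l j) then qbracket k eta * Bcoef n m k eta tn l eps x else 0)"
    using Mterm_block_sum[OF l] by (intro sum.cong) auto
  finally show ?thesis .
qed

theorem restricted_coefficient:
  "restr_coef n m k (MLam n) (Mcoef n (exp (eta/2)) tn) lam' x = RHScoef n m k eta tn lam' x"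
proof -
  have "restr_coef n m k (MLam n) (Mcoef n (exp (eta/2)) tn) lam' x = sum (restr_term lam') {1..n}"
    unfolding restr_coef_Mcoef restr_term_def ..
  also have "\<dots> = sum (restr_term lam') {1..N1} + (\<Sum>l=1..m. \<Sum>r=1..k. restr_term lam' (pos l r))"
    by (rule sum_split)
  also have "sum (restr_term lam') {1..N1}
      = (\<Sum>i=1..N1. \<Sum>eps\<in>signs. if lam' = (\<lambda>j. eps * evec i j) then Acoef n m k eta tn i eps x else 0)"
    by (rule sum.cong[OF refl]) (rule outer_contribution)
  also have "(\<Sum>l=1..m. \<Sum>r=1..k. restr_term lam' (pos l r))
      = (\<Sum>l=1..m. qbracket k eta * (\<Sum>eps\<in>signs. if lam' = (\<lambda>j. eps * ublock n m k l j) then Bcoef n m k eta tn l eps x else 0))"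
  proof (rule sum.cong[OF refl])
    fix l assume l: "l \<in> {1..m}"
    show "(\<Sum>r=1..k. restr_term lam' (pos l r))
        = qbracket k eta * (\<Sum>eps\<in>signs. if lam' = (\<lambda>j. eps * ublock n m k l j) then Bcoef n m k eta tn l eps x else 0)"
      unfolding block_contribution[OF l] sum_distrib_left by (rule sum.cong) simp_all
  qed
  finally show ?thesis unfolding RHScoef_def Let_def qbracket_def N1_def sum_distrib_left by simp
qed

end

theorem mainTheorem16:
  fixes n m k :: nat and eta1 tn :: complex
  assumes "k \<ge> 1" and "m * k \<le> n"
    and "\<forall>r\<in>\<rat>. of_nat k * eta1 \<noteq> \<i> * complex_of_real (pi * r)"
    and "tn \<noteq> 0"
  shows "\<forall>x\<in>D0 n m k eta1. generic_pt n m k eta1 x \<longrightarrow>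
           (\<forall>lam'. restr_coef n m k (MLam n) (Mcoef n (exp (eta1/2)) tn) lam' x
                   = RHScoef n m k eta1 tn lam' x)"
proof (intro ballI impI allI)
  fix x lam' assume "x \<in> D0 n m k eta1" and "generic_pt n m k eta1 x"
  then interpret generic_point n m k eta1 tn x
    using assms(1,2) exp_ne_1_of_hbar_generic[OF assms(3)] by unfold_locales
  show "restr_coef n m k (MLam n) (Mcoef n (exp (eta1/2)) tn) lam' x = RHScoef n m k eta1 tn lam' x"
    by (rule restricted_coefficient)
qed

end
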